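(* Let $A$ be a locally-complex Cayley--Dickson algebra and $f(x)\in A[x]$ a polynomial of degree $n$. Then the set of spherical roots of $f(x)$ is a union of at most $\lfloor n/2\rfloor$ quadratic-equivalence classes.
   Context: Real Cayley--Dickson algebras: $A_0=\mathbb{R}$ with identity involution, $A_{k+1}=A_k\{\gamma_k\}=A_k\times A_k$ with product $(a,b)(c,d)=(ac+\gamma_k\bar d b,\ da+b\bar c)$ and involution $\overline{(a,b)}=(\bar a,-b)$. A real unital algebra is locally-complex if every non-real element generates a subalgebra isomorphic to $\mathbb{C}$ (for Cayley--Dickson algebras: all $\gamma_k=-1$ up to isomorphism). Trace $\mathrm{tr}(\lambda)=\lambda+\bar\lambda\in\mathbb{R}$, norm $\mathrm{n}(\lambda)=\bar\lambda\lambda\in\mathbb{R}$, characteristic polynomial $p_\lambda(x)=x^2-\mathrm{tr}(\lambda)x+\mathrm{n}(\lambda)$. $A[x]=A\otimes_{\mathbb{R}}\mathbb{R}[x]$ with central $x$; $f(x)=a_mx^m+\dots+a_0$, $a_k\in A$; substitution $f(r)=\sum_k a_k(r^k)$. A root $\lambda\in A\setminus\mathbb{R}$ of $f$ is spherical if every $r\in A$ with $p_\lambda(r)=0$ is a root of $f$. Elements $r,\lambda$ are quadratically-equivalent if $\mathrm{tr}(r)=\mathrm{tr}(\lambda)$ and $\mathrm{n}(r)=\mathrm{n}(\lambda)$. *)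

theory Defs
  imports Complex_Main
begin

text \<open>Real Cayley--Dickson algebra A_k, elements represented as real lists of length 2^k.
  An element (a,b) of A_(k+1) = A_k x A_k is the list a @ b.\<close>

definition cd_carrier :: "nat \<Rightarrow> real list set" where
  "cd_carrier k = {x. length x = 2 ^ k}"

definition cd_add :: "real list \<Rightarrow> real list \<Rightarrow> real list" where
  "cd_add x y = map2 (+) x y"

definition cd_neg :: "real list \<Rightarrow> real list" where
  "cd_neg x = map uminus x"

definition cd_sub :: "real list \<Rightarrow> real list \<Rightarrow> real list" where
  "cd_sub x y = cd_add x (cd_neg y)"

definition cd_scale :: "real \<Rightarrow> real list \<Rightarrow> real list" where
  "cd_scale c x = map ((*) c) x"

definition cd_of_real :: "nat \<Rightarrow> real \<Rightarrow> real list" where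
  "cd_of_real k r = r # replicate (2 ^ k - 1) 0"

definition cd_zero :: "nat \<Rightarrow> real list" where
  "cd_zero k = cd_of_real k 0"

definition cd_one :: "nat \<Rightarrow> real list" where
  "cd_one k = cd_of_real k 1"

definition cd_is_real :: "nat \<Rightarrow> real list \<Rightarrow> bool" where
  "cd_is_real k x \<longleftrightarrow> (\<exists>r. x = cd_of_real k r)"

fun cd_conj :: "nat \<Rightarrow> real list \<Rightarrow> real list" where
  "cd_conj 0 x = x"
| "cd_conj (Suc k) x = cd_conj k (take (2 ^ k) x) @ cd_neg (drop (2 ^ k) x)"

fun cd_mult_gen :: "(nat \<Rightarrow> real) \<Rightarrow> nat \<Rightarrow> real list \<Rightarrow> real list \<Rightarrow> real list" where
  "cd_mult_gen \<gamma> 0 x y = [hd x * hd y]"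
| "cd_mult_gen \<gamma> (Suc k) x y =
     (let a = take (2 ^ k) x; b = drop (2 ^ k) x;
          c = take (2 ^ k) y; d = drop (2 ^ k) y
      in cd_add (cd_mult_gen \<gamma> k a c) (cd_scale (\<gamma> k) (cd_mult_gen \<gamma> k (cd_conj k d) b))
         @ cd_add (cd_mult_gen \<gamma> k d a) (cd_mult_gen \<gamma> k b (cd_conj k c)))"

text \<open>The locally-complex Cayley--Dickson algebra A_k: all gamma_k = -1
  (every locally-complex real Cayley--Dickson algebra is isomorphic to one of these).\<close>
definition cd_mult :: "nat \<Rightarrow> real list \<Rightarrow> real list \<Rightarrow> real list" where
  "cd_mult k x y = cd_mult_gen (\<lambda>_. -1) k x y"

fun cd_pow :: "nat \<Rightarrow> real list \<Rightarrow> nat \<Rightarrow> real list" where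
  "cd_pow k r 0 = cd_one k"
| "cd_pow k r (Suc j) = cd_mult k r (cd_pow k r j)"

text \<open>tr(lambda) = lambda + conj lambda and n(lambda) = conj lambda * lambda, which lie in R;
  we read off the real number as the first coordinate.\<close>
definition cd_tr :: "nat \<Rightarrow> real list \<Rightarrow> real" where
  "cd_tr k x = hd (cd_add x (cd_conj k x))"

definition cd_norm :: "nat \<Rightarrow> real list \<Rightarrow> real" where
  "cd_norm k x = hd (cd_mult k (cd_conj k x) x)"

definition cd_charpoly_eval :: "nat \<Rightarrow> real list \<Rightarrow> real list \<Rightarrow> real list" where
  "cd_charpoly_eval k l r =
     cd_add (cd_sub (cd_pow k r 2) (cd_scale (cd_tr k l) r)) (cd_of_real k (cd_norm k l))"

definition cd_poly_eval :: "nat \<Rightarrow> (nat \<Rightarrow> real list) \<Rightarrow> nat \<Rightarrow> real list \<Rightarrow> real list" where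
  "cd_poly_eval k a n r = foldr cd_add (map (\<lambda>j. cd_mult k (a j) (cd_pow k r j)) [0..<Suc n]) (cd_zero k)"

definition cd_spherical_root :: "nat \<Rightarrow> (nat \<Rightarrow> real list) \<Rightarrow> nat \<Rightarrow> real list \<Rightarrow> bool" where
  "cd_spherical_root k a n l \<longleftrightarrow>
     l \<in> cd_carrier k \<and> \<not> cd_is_real k l \<and> cd_poly_eval k a n l = cd_zero k \<and>
     (\<forall>r \<in> cd_carrier k. cd_charpoly_eval k l r = cd_zero k \<longrightarrow> cd_poly_eval k a n r = cd_zero k)"

definition cd_quad_equiv :: "nat \<Rightarrow> real list \<Rightarrow> real list \<Rightarrow> bool" where
  "cd_quad_equiv k r l \<longleftrightarrow> cd_tr k r = cd_tr k l \<and> cd_norm k r = cd_norm k l"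

definition cd_quad_class :: "nat \<Rightarrow> real list \<Rightarrow> real list set" where
  "cd_quad_class k l = {r \<in> cd_carrier k. cd_quad_equiv k r l}"

end

theory Submission
  imports Defs "HOL-Computational_Algebra.Polynomial"
begin

text \<open>
  Let t and q be the trace and norm of a spherical root. Every r with r^2 = t r - q satisfies
  r^j = alpha_j r + beta_j, where x^j = alpha_j x + beta_j modulo x^2 - t x + q, so
  f(r) = A r + B with A = sum alpha_j a_j and B = sum beta_j a_j. Writing elements of A_k as
  pairs over A_(k-1), these r include (t/2, c) for c = +-sqrt(q - t^2/4), which is nonzero as
  the root is not real. Since x (t/2, c) = (t/2) x + c x (0, 1) and (a, b) (0, 1) = (-b, a),
  both A and B vanish. Coordinatewise, x^2 - t x + q thus divides each real polynomial
  sum_j (a_j)_i x^j. For i with (a_n)_i nonzero, the conjugate pairs of non-real roots of these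
  quadratics are distinct roots of a nonzero polynomial of degree at most n, so there are at
  most n/2 pairs (t, q).
\<close>

definition conj_list :: "real list \<Rightarrow> real list" where
  "conj_list x = hd x # map uminus (tl x)"

definition sum_sq :: "real list \<Rightarrow> real" where
  "sum_sq x = (\<Sum>v\<leftarrow>x. v\<^sup>2)"

lemma length_cd_add [simp]: "length (cd_add x y) = min (length x) (length y)"
  by (simp add: cd_add_def)

lemma length_cd_neg [simp]: "length (cd_neg x) = length x"
  by (simp add: cd_neg_def)

lemma length_cd_sub [simp]: "length (cd_sub x y) = min (length x) (length y)"
  by (simp add: cd_sub_def)

lemma length_cd_scale [simp]: "length (cd_scale c x) = length x"
  by (simp add: cd_scale_def)

lemma length_cd_of_real [simp]: "length (cd_of_real k r) = 2 ^ k"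
  by (simp add: cd_of_real_def)

lemma length_conj_list [simp]: "x \<noteq> [] \<Longrightarrow> length (conj_list x) = length x"
  by (simp add: conj_list_def)

lemma cd_scale_1 [simp]: "cd_scale 1 x = x"
  by (induction x) (simp_all add: cd_scale_def)

lemma nth_cd_add [simp]: "i < length x \<Longrightarrow> i < length y \<Longrightarrow> cd_add x y ! i = x ! i + y ! i"
  by (simp add: cd_add_def)

lemma nth_cd_neg [simp]: "i < length x \<Longrightarrow> cd_neg x ! i = - x ! i"
  by (simp add: cd_neg_def)

lemma nth_cd_sub [simp]: "i < length x \<Longrightarrow> i < length y \<Longrightarrow> cd_sub x y ! i = x ! i - y ! i"
  by (simp add: cd_sub_def)

lemma nth_cd_scale [simp]: "i < length x \<Longrightarrow> cd_scale c x ! i = c * x ! i"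
  by (simp add: cd_scale_def)

lemma nth_cd_of_real [simp]: "i < 2 ^ k \<Longrightarrow> cd_of_real k r ! i = (if i = 0 then r else 0)"
  by (simp add: cd_of_real_def nth_Cons')

lemma nth_conj_list [simp]: "i < length x \<Longrightarrow> conj_list x ! i = (if i = 0 then x ! 0 else - x ! i)"
  by (cases x) (auto simp: conj_list_def nth_Cons')

lemma hd_cd_of_real [simp]: "hd (cd_of_real k r) = r"
  by (simp add: cd_of_real_def)

lemma cd_of_real_Suc: "cd_of_real (Suc k) r = cd_of_real k r @ cd_of_real k 0"
  by (rule nth_equalityI) (auto simp: nth_append)

lemma conj_list_cd_of_real [simp]: "conj_list (cd_of_real k r) = cd_of_real k r"
  by (rule nth_equalityI) (auto simp: cd_of_real_def)

lemma sum_sq_append: "sum_sq (x @ y) = sum_sq x + sum_sq y"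
  by (simp add: sum_sq_def)

lemma sum_sq_nonneg: "0 \<le> sum_sq x"
  unfolding sum_sq_def by (rule sum_list_nonneg) auto

lemma sum_sq_cd_of_real [simp]: "sum_sq (cd_of_real k u) = u\<^sup>2"
  by (simp add: sum_sq_def cd_of_real_def sum_list_replicate)

lemma halves_of_length:
  assumes "length x = 2 ^ Suc k"
  shows "length (take (2 ^ k) x) = 2 ^ k" "length (drop (2 ^ k) x) = 2 ^ k"
    "take (2 ^ k) x \<noteq> []" "drop (2 ^ k) x \<noteq> []"
  using assms by auto

lemma cd_conj_eq_conj_list: "length x = 2 ^ k \<Longrightarrow> cd_conj k x = conj_list x"
proof (induction k arbitrary: x)
  case 0
  then show ?case by (cases x) (auto simp: conj_list_def)
next
  case (Suc k)
  note halves = halves_of_length[OF Suc.prems]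
  have "cd_conj k (take (2 ^ k) x) = conj_list (take (2 ^ k) x)"
    using Suc.IH halves(1) .
  then show ?case
    by simp (rule nth_equalityI; use halves Suc.prems in \<open>simp add: nth_append\<close>)
qed

lemma length_cd_mult_gen [simp]: "length (cd_mult_gen g k x y) = 2 ^ k"
  by (induction k arbitrary: x y) (simp_all add: Let_def)

lemma length_cd_mult [simp]: "length (cd_mult k x y) = 2 ^ k"
  by (simp add: cd_mult_def)

lemma conj_list_cd_add:
  "length x = length y \<Longrightarrow> x \<noteq> [] \<Longrightarrow>
    conj_list (cd_add x y) = cd_add (conj_list x) (conj_list y)"
  by (cases x; cases y) (auto simp: conj_list_def cd_add_def intro!: nth_equalityI)

lemma conj_list_cd_scale: "x \<noteq> [] \<Longrightarrow> conj_list (cd_scale c x) = cd_scale c (conj_list x)"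
  by (cases x) (auto simp: conj_list_def cd_scale_def)

lemma take_cd_add: "take n (cd_add x y) = cd_add (take n x) (take n y)"
  by (simp add: cd_add_def take_map take_zip)

lemma drop_cd_add: "drop n (cd_add x y) = cd_add (drop n x) (drop n y)"
  by (simp add: cd_add_def drop_map drop_zip)

lemma take_cd_scale: "take n (cd_scale c x) = cd_scale c (take n x)"
  by (simp add: cd_scale_def take_map)

lemma drop_cd_scale: "drop n (cd_scale c x) = cd_scale c (drop n x)"
  by (simp add: cd_scale_def drop_map)

lemma cd_mult_gen_add:
  assumes "length x = 2 ^ k" "length y = 2 ^ k" "length z = 2 ^ k"
  shows "cd_mult_gen g k (cd_add x y) z = cd_add (cd_mult_gen g k x z) (cd_mult_gen g k y z)"
    and "cd_mult_gen g k z (cd_add x y) = cd_add (cd_mult_gen g k z x) (cd_mult_gen g k z y)"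
  using assms
proof (induction k arbitrary: x y z)
  case 0
  { case 1 then show ?case by (auto simp: length_Suc_conv cd_add_def distrib_right) }
  { case 2 then show ?case by (auto simp: length_Suc_conv cd_add_def distrib_left) }
next
  case (Suc k)
  { case 1
    then show ?case
      using halves_of_length[OF "1"(1)] halves_of_length[OF "1"(2)] halves_of_length[OF "1"(3)]
      by (simp add: Let_def take_cd_add drop_cd_add cd_conj_eq_conj_list conj_list_cd_add Suc.IH)
        (rule nth_equalityI; simp add: nth_append distrib_left) }
  { case 2
    then show ?case
      using halves_of_length[OF "2"(1)] halves_of_length[OF "2"(2)] halves_of_length[OF "2"(3)]
      by (simp add: Let_def take_cd_add drop_cd_add cd_conj_eq_conj_list conj_list_cd_add Suc.IH)
        (rule nth_equalityI; simp add: nth_append distrib_left) }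
qed

lemma cd_mult_gen_scale:
  assumes "length x = 2 ^ k" "length z = 2 ^ k"
  shows "cd_mult_gen g k (cd_scale c x) z = cd_scale c (cd_mult_gen g k x z)"
    and "cd_mult_gen g k z (cd_scale c x) = cd_scale c (cd_mult_gen g k z x)"
  using assms
proof (induction k arbitrary: x z)
  case 0
  { case 1 then show ?case by (auto simp: length_Suc_conv cd_scale_def) }
  { case 2 then show ?case by (auto simp: length_Suc_conv cd_scale_def) }
next
  case (Suc k)
  { case 1
    then show ?case
      using halves_of_length[OF "1"(1)] halves_of_length[OF "1"(2)]
      by (simp add: Let_def take_cd_scale drop_cd_scale cd_conj_eq_conj_list conj_list_cd_scale Suc.IH)
        (rule nth_equalityI; simp add: nth_append distrib_left) }
  { case 2
    then show ?case
      using halves_of_length[OF "2"(1)] halves_of_length[OF "2"(2)]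
      by (simp add: Let_def take_cd_scale drop_cd_scale cd_conj_eq_conj_list conj_list_cd_scale Suc.IH)
        (rule nth_equalityI; simp add: nth_append distrib_left) }
qed

lemma cd_mult_gen_of_real:
  assumes "length x = 2 ^ k"
  shows "cd_mult_gen g k x (cd_of_real k u) = cd_scale u x"
    and "cd_mult_gen g k (cd_of_real k u) x = cd_scale u x"
  using assms
proof (induction k arbitrary: x u)
  case 0
  { case 1 then show ?case by (auto simp: length_Suc_conv cd_scale_def cd_of_real_def) }
  { case 2 then show ?case by (auto simp: length_Suc_conv cd_scale_def cd_of_real_def) }
next
  case (Suc k)
  { case 1
    then show ?case
      using halves_of_length[OF "1"]
      by (simp add: Let_def cd_of_real_Suc cd_conj_eq_conj_list Suc.IH)
        (rule nth_equalityI; simp add: nth_append) }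
  { case 2
    then show ?case
      using halves_of_length[OF "2"]
      by (simp add: Let_def cd_of_real_Suc cd_conj_eq_conj_list Suc.IH)
        (rule nth_equalityI; simp add: nth_append) }
qed

lemma cd_mult_gen_conj_list_self:
  "length x = 2 ^ k \<Longrightarrow> cd_mult_gen (\<lambda>_. -1) k (conj_list x) x = cd_of_real k (sum_sq x)"
proof (induction k arbitrary: x)
  case 0
  then show ?case
    by (auto simp: length_Suc_conv cd_of_real_def conj_list_def sum_sq_def power2_eq_square)
next
  case (Suc k)
  let ?a = "take (2 ^ k) x" and ?b = "drop (2 ^ k) x"
  note halves = halves_of_length[OF Suc.prems]
  have conj_halves: "take (2 ^ k) (conj_list x) = conj_list ?a"
    "drop (2 ^ k) (conj_list x) = cd_scale (-1) ?b"
    using Suc.prems by (cases x; auto simp: conj_list_def take_map drop_map cd_scale_def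
        take_Cons' drop_Cons' intro!: nth_equalityI)+
  have "sum_sq x = sum_sq ?a + sum_sq ?b"
    by (metis append_take_drop_id sum_sq_append)
  then show ?case
    using halves
    by (simp add: Let_def conj_halves cd_conj_eq_conj_list Suc.IH cd_mult_gen_scale cd_of_real_Suc)
      (intro conjI; rule nth_equalityI; simp)
qed

lemma nth_cd_mult_gen_complex:
  assumes "length x = 2 ^ Suc k" "i < 2 ^ Suc k"
  shows "cd_mult_gen g (Suc k) x (cd_of_real k u @ cd_of_real k v) ! i =
    u * x ! i + v * (if i < 2 ^ k then g k * x ! (i + 2 ^ k) else x ! (i - 2 ^ k))"
  using assms halves_of_length[OF assms(1)]
  by (simp add: Let_def cd_conj_eq_conj_list cd_mult_gen_of_real nth_append algebra_simps)

lemma cd_tr_eq: "length x = 2 ^ k \<Longrightarrow> cd_tr k x = 2 * hd x"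
  by (cases x) (auto simp: cd_tr_def cd_conj_eq_conj_list conj_list_def cd_add_def)

lemma cd_norm_eq: "length x = 2 ^ k \<Longrightarrow> cd_norm k x = sum_sq x"
  by (simp add: cd_norm_def cd_mult_def cd_conj_eq_conj_list cd_mult_gen_conj_list_self)

lemma not_cd_is_real_iff:
  assumes "length x = 2 ^ k"
  shows "\<not> cd_is_real k x \<longleftrightarrow> (cd_tr k x)\<^sup>2 < 4 * cd_norm k x"
proof -
  obtain h t where x: "x = h # t" and t: "length t = 2 ^ k - 1"
    using assms by (cases x) auto
  have "cd_is_real k x \<longleftrightarrow> t = replicate (length t) 0"
    using t by (auto simp: x cd_is_real_def cd_of_real_def)
  also have "\<dots> \<longleftrightarrow> (\<forall>v\<in>set t. v = 0)"
    by (metis in_set_replicate replicate_length_same)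
  also have "\<dots> \<longleftrightarrow> sum_sq t = 0"
    unfolding sum_sq_def by (subst sum_list_nonneg_eq_0_iff) auto
  also have "\<dots> \<longleftrightarrow> \<not> sum_sq t > 0"
    using sum_sq_nonneg[of t] by linarith
  finally show ?thesis
    using assms by (simp add: cd_tr_eq cd_norm_eq x sum_sq_def power_mult_distrib)
qed

lemma cd_pow_two: "length r = 2 ^ k \<Longrightarrow> cd_pow k r 2 = cd_mult k r r"
  by (simp add: numeral_2_eq_2 cd_one_def cd_mult_def cd_mult_gen_of_real)

lemma cd_charpoly_eval_self:
  assumes r: "length r = 2 ^ k"
  shows "cd_charpoly_eval k r r = cd_zero k"
proof -
  have "r \<noteq> []"
    using r by auto
  with r have tr: "cd_of_real k (cd_tr k r) = cd_add r (conj_list r)"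
    by (cases r) (auto simp: cd_tr_eq nth_Cons' intro!: nth_equalityI)
  have "cd_scale (cd_tr k r) r = cd_mult k (cd_of_real k (cd_tr k r)) r"
    using r by (simp add: cd_mult_def cd_mult_gen_of_real)
  also have "\<dots> = cd_add (cd_mult k r r) (cd_of_real k (cd_norm k r))"
    using r \<open>r \<noteq> []\<close>
    by (simp add: tr cd_mult_def cd_mult_gen_add cd_mult_gen_conj_list_self cd_norm_eq)
  finally show ?thesis
    using r unfolding cd_charpoly_eval_def cd_pow_two[OF r] cd_zero_def
    by (intro nth_equalityI) auto
qed

lemma cd_mult_self_of_charpoly_root:
  assumes r: "length r = 2 ^ k" and root: "cd_charpoly_eval k l r = cd_zero k"
  shows "cd_mult k r r = cd_add (cd_scale (cd_tr k l) r) (cd_of_real k (- cd_norm k l))"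
proof (rule nth_equalityI)
  fix i assume "i < length (cd_mult k r r)"
  then show "cd_mult k r r ! i = cd_add (cd_scale (cd_tr k l) r) (cd_of_real k (- cd_norm k l)) ! i"
    using r arg_cong[OF root, of "\<lambda>x. x ! i"]
    by (simp add: cd_charpoly_eval_def cd_pow_two cd_zero_def split: if_splits)
qed (use r in simp)

(* x^j = fst (quad_rem t q j) * x + snd (quad_rem t q j)  modulo  x^2 - t * x + q *)

fun quad_rem :: "real \<Rightarrow> real \<Rightarrow> nat \<Rightarrow> real \<times> real" where
  "quad_rem t q 0 = (0, 1)"
| "quad_rem t q (Suc j) = (t * fst (quad_rem t q j) + snd (quad_rem t q j), - q * fst (quad_rem t q j))"

lemma power_quad_rem:
  fixes z :: "'a::{real_algebra_1,comm_ring_1}"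
  assumes "z\<^sup>2 = of_real t * z - of_real q"
  shows "z ^ j = of_real (fst (quad_rem t q j)) * z + of_real (snd (quad_rem t q j))"
proof (induction j)
  case (Suc j)
  have "z ^ Suc j = z ^ j * z"
    by (rule power_Suc2)
  also have "\<dots> = of_real (fst (quad_rem t q j)) * z\<^sup>2 + of_real (snd (quad_rem t q j)) * z"
    by (simp add: Suc distrib_right mult.assoc power2_eq_square)
  also have "\<dots> = of_real (fst (quad_rem t q (Suc j))) * z + of_real (snd (quad_rem t q (Suc j)))"
    by (simp add: assms algebra_simps)
  finally show ?case .
qed simp

lemma cd_pow_quad_rem:
  assumes r: "length r = 2 ^ k" and root: "cd_charpoly_eval k l r = cd_zero k"
  defines "t \<equiv> cd_tr k l" and "q \<equiv> cd_norm k l"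
  shows "cd_pow k r j = cd_add (cd_scale (fst (quad_rem t q j)) r) (cd_of_real k (snd (quad_rem t q j)))"
proof (induction j)
  case 0
  show ?case using r by (intro nth_equalityI) (auto simp: cd_one_def)
next
  case (Suc j)
  have "cd_pow k r (Suc j) = cd_add (cd_scale (fst (quad_rem t q j)) (cd_mult k r r))
      (cd_scale (snd (quad_rem t q j)) r)"
    using r by (simp add: Suc cd_mult_def cd_mult_gen_add cd_mult_gen_scale cd_mult_gen_of_real)
  then show ?case
    using r by (simp add: cd_mult_self_of_charpoly_root[OF r root] flip: t_def q_def)
      (intro nth_equalityI; simp add: algebra_simps)
qed

lemma nth_cd_poly_eval:
  assumes i: "i < 2 ^ k"
  shows "cd_poly_eval k a n r ! i = (\<Sum>j\<le>n. cd_mult k (a j) (cd_pow k r j) ! i)"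
proof -
  have "length (foldr cd_add (map g js) (cd_zero k)) = 2 ^ k \<and>
      foldr cd_add (map g js) (cd_zero k) ! i = (\<Sum>j\<leftarrow>js. g j ! i)"
    if "\<And>j. length (g j) = 2 ^ k" for g :: "nat \<Rightarrow> real list" and js
    using that i by (induction js) (auto simp: cd_zero_def)
  then show ?thesis
    by (simp add: cd_poly_eval_def atLeast0LessThan lessThan_Suc_atMost
        flip: sum_set_upt_conv_sum_list_nat del: upt_Suc)
qed

lemma nth_cd_poly_eval_charpoly_root:
  assumes a: "\<forall>j\<le>n. a j \<in> cd_carrier k" and r: "length r = 2 ^ k"
    and root: "cd_charpoly_eval k l r = cd_zero k" and i: "i < 2 ^ k"
  defines "t \<equiv> cd_tr k l" and "q \<equiv> cd_norm k l"
  shows "cd_poly_eval k a n r ! i =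
    (\<Sum>j\<le>n. fst (quad_rem t q j) * cd_mult k (a j) r ! i + snd (quad_rem t q j) * a j ! i)"
proof -
  have "cd_mult k (a j) (cd_pow k r j) ! i =
      fst (quad_rem t q j) * cd_mult k (a j) r ! i + snd (quad_rem t q j) * a j ! i"
    if "j \<le> n" for j
    using a that r i
    by (simp add: cd_pow_quad_rem[OF r root] cd_mult_def cd_mult_gen_add cd_mult_gen_scale
        cd_mult_gen_of_real cd_carrier_def flip: t_def q_def)
  then show ?thesis
    by (simp add: nth_cd_poly_eval[OF i])
qed

lemma cd_charpoly_eval_complex_point:
  assumes "c\<^sup>2 = cd_norm (Suc m) l - (cd_tr (Suc m) l)\<^sup>2 / 4"
  shows "cd_charpoly_eval (Suc m) l (cd_of_real m (cd_tr (Suc m) l / 2) @ cd_of_real m c) =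
    cd_zero (Suc m)"
proof -
  let ?r = "cd_of_real m (cd_tr (Suc m) l / 2) @ cd_of_real m c"
  have "cd_tr (Suc m) ?r = cd_tr (Suc m) l"
    by (simp add: cd_tr_eq cd_of_real_def)
  moreover have "cd_norm (Suc m) ?r = cd_norm (Suc m) l"
    using assms by (simp add: cd_norm_eq sum_sq_append power_divide)
  ultimately have "cd_charpoly_eval (Suc m) l ?r = cd_charpoly_eval (Suc m) ?r ?r"
    by (simp add: cd_charpoly_eval_def)
  also have "\<dots> = cd_zero (Suc m)"
    by (rule cd_charpoly_eval_self) simp
  finally show ?thesis .
qed

lemma cd_is_real_level_0: "length x = 1 \<Longrightarrow> cd_is_real 0 x"
  by (cases x) (auto simp: cd_is_real_def cd_of_real_def)

lemma spherical_root_eval_complex_point: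
  assumes a: "\<forall>j\<le>n. a j \<in> cd_carrier (Suc m)" and sph: "cd_spherical_root (Suc m) a n l"
    and c: "c\<^sup>2 = cd_norm (Suc m) l - (cd_tr (Suc m) l)\<^sup>2 / 4" and i: "i < 2 ^ Suc m"
  defines "t \<equiv> cd_tr (Suc m) l" and "q \<equiv> cd_norm (Suc m) l"
  shows "(\<Sum>j\<le>n. (fst (quad_rem t q j) * t / 2 + snd (quad_rem t q j)) * a j ! i) +
    c * (\<Sum>j\<le>n. fst (quad_rem t q j) *
      (if i < 2 ^ m then - a j ! (i + 2 ^ m) else a j ! (i - 2 ^ m))) = 0"
proof -
  let ?r = "cd_of_real m (t / 2) @ cd_of_real m c"
  have root: "cd_charpoly_eval (Suc m) l ?r = cd_zero (Suc m)"
    unfolding t_def using c by (rule cd_charpoly_eval_complex_point)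
  then have "cd_poly_eval (Suc m) a n ?r = cd_zero (Suc m)"
    using sph by (auto simp: cd_spherical_root_def cd_carrier_def)
  then have "0 = cd_poly_eval (Suc m) a n ?r ! i"
    using i by (simp add: cd_zero_def)
  also have "\<dots> = (\<Sum>j\<le>n. fst (quad_rem t q j) * cd_mult (Suc m) (a j) ?r ! i +
      snd (quad_rem t q j) * a j ! i)"
    by (rule nth_cd_poly_eval_charpoly_root[OF a _ root i, folded t_def q_def]) simp
  also have "\<dots> = (\<Sum>j\<le>n. fst (quad_rem t q j) * (t / 2 * a j ! i +
      c * (if i < 2 ^ m then - a j ! (i + 2 ^ m) else a j ! (i - 2 ^ m))) +
      snd (quad_rem t q j) * a j ! i)"
    using a i by (intro sum.cong refl)
      (simp add: cd_mult_def nth_cd_mult_gen_complex cd_carrier_def del: cd_mult_gen.simps)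
  also have "\<dots> = (\<Sum>j\<le>n. (fst (quad_rem t q j) * t / 2 + snd (quad_rem t q j)) * a j ! i) +
    c * (\<Sum>j\<le>n. fst (quad_rem t q j) *
      (if i < 2 ^ m then - a j ! (i + 2 ^ m) else a j ! (i - 2 ^ m)))"
    by (simp add: sum.distrib sum_distrib_left algebra_simps)
  finally show ?thesis ..
qed

lemma spherical_root_quad_rem_sums:
  assumes a: "\<forall>j\<le>n. a j \<in> cd_carrier k" and sph: "cd_spherical_root k a n l" and i: "i < 2 ^ k"
  defines "t \<equiv> cd_tr k l" and "q \<equiv> cd_norm k l"
  shows "(\<Sum>j\<le>n. fst (quad_rem t q j) * a j ! i) = 0 \<and>
    (\<Sum>j\<le>n. snd (quad_rem t q j) * a j ! i) = 0"
proof -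
  have l: "length l = 2 ^ k" and "\<not> cd_is_real k l"
    using sph by (auto simp: cd_spherical_root_def cd_carrier_def)
  then have tq: "t\<^sup>2 < 4 * q"
    by (simp add: not_cd_is_real_iff t_def q_def)
  obtain m where k: "k = Suc m"
    using l \<open>\<not> cd_is_real k l\<close> cd_is_real_level_0 by (cases k) auto
  define s where "s = sqrt (q - t\<^sup>2 / 4)"
  have "s > 0" and s: "s\<^sup>2 = q - t\<^sup>2 / 4" and s': "(- s)\<^sup>2 = q - t\<^sup>2 / 4"
    using tq by (simp_all add: s_def)
  define P Q where
    "P i = (\<Sum>j\<le>n. (fst (quad_rem t q j) * t / 2 + snd (quad_rem t q j)) * a j ! i)" and
    "Q i = (\<Sum>j\<le>n. fst (quad_rem t q j) *
      (if i < 2 ^ m then - a j ! (i + 2 ^ m) else a j ! (i - 2 ^ m)))" for i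
  have "P i + s * Q i = 0" "P i - s * Q i = 0" if "i < 2 ^ k" for i
    using spherical_root_eval_complex_point[OF a[unfolded k] sph[unfolded k], of s i]
      spherical_root_eval_complex_point[OF a[unfolded k] sph[unfolded k], of "- s" i] s s' that
    by (simp_all add: P_def Q_def k t_def q_def)
  with \<open>s > 0\<close> have P: "P i = 0" and Q: "Q i = 0" if "i < 2 ^ k" for i
    using that by auto
  have fst_sum: "(\<Sum>j\<le>n. fst (quad_rem t q j) * a j ! i) = 0"
  proof (cases "i < 2 ^ m")
    case True
    then show ?thesis
      using Q[of "i + 2 ^ m"] k by (simp add: Q_def)
  next
    case False
    with i k have "i - 2 ^ m < 2 ^ m" "i - 2 ^ m + 2 ^ m = i"
      by auto
    then show ?thesis
      using Q[of "i - 2 ^ m"] k by (simp add: Q_def sum_negf)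
  qed
  moreover have "P i = t / 2 * (\<Sum>j\<le>n. fst (quad_rem t q j) * a j ! i) +
      (\<Sum>j\<le>n. snd (quad_rem t q j) * a j ! i)"
    by (simp add: P_def sum.distrib sum_distrib_left algebra_simps)
  ultimately show ?thesis
    using P[OF i] by simp
qed

lemma spherical_root_coord_poly_root:
  assumes a: "\<forall>j\<le>n. a j \<in> cd_carrier k" and sph: "cd_spherical_root k a n l" and i: "i < 2 ^ k"
    and z: "z\<^sup>2 = of_real (cd_tr k l) * z - of_real (cd_norm k l)"
  shows "poly (\<Sum>j\<le>n. monom (complex_of_real (a j ! i)) j) z = 0"
proof -
  let ?t = "cd_tr k l" and ?q = "cd_norm k l"
  have "poly (\<Sum>j\<le>n. monom (complex_of_real (a j ! i)) j) z = (\<Sum>j\<le>n. of_real (a j ! i) *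
      (of_real (fst (quad_rem ?t ?q j)) * z + of_real (snd (quad_rem ?t ?q j))))"
    by (simp add: poly_sum poly_monom power_quad_rem[OF z])
  also have "\<dots> = of_real (\<Sum>j\<le>n. fst (quad_rem ?t ?q j) * a j ! i) * z +
      of_real (\<Sum>j\<le>n. snd (quad_rem ?t ?q j) * a j ! i)"
    by (simp add: sum_distrib_left sum_distrib_right sum.distrib algebra_simps)
  also have "\<dots> = 0"
    using spherical_root_quad_rem_sums[OF a sph i] by simp
  finally show ?thesis .
qed

lemma card_nonreal_quadratic_factors_le:
  fixes p :: "complex poly" and T :: "(real \<times> real) set"
  assumes p: "p \<noteq> 0"
    and T: "\<And>t q. (t, q) \<in> T \<Longrightarrow> t\<^sup>2 < 4 * q"
    and roots: "\<And>t q z. (t, q) \<in> T \<Longrightarrow> z\<^sup>2 = of_real t * z - of_real q \<Longrightarrow> poly p z = 0"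
  shows "finite T \<and> 2 * card T \<le> degree p"
proof -
  define root where "root tq = Complex (fst tq / 2) (sqrt (snd tq - (fst tq)\<^sup>2 / 4))"
    for tq :: "real \<times> real"
  let ?R = "root ` T" and ?Z = "{z. poly p z = 0}"
  have Im_root: "Im (root (t, q)) > 0" and Im_root_sq: "(Im (root (t, q)))\<^sup>2 = q - t\<^sup>2 / 4"
    if "(t, q) \<in> T" for t q
    using T[OF that] by (simp_all add: root_def)
  have "root (t, q) \<in> ?Z" "cnj (root (t, q)) \<in> ?Z" if "(t, q) \<in> T" for t q
    using roots[OF that] Im_root_sq[OF that]
    by (auto simp: root_def complex_eq_iff power2_eq_square algebra_simps)
  then have sub: "?R \<union> cnj ` ?R \<subseteq> ?Z"
    by auto
  have pos: "Im z > 0" if "z \<in> ?R" for z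
    using that Im_root by auto
  then have "Im z < 0" if "z \<in> cnj ` ?R" for z
    using that by fastforce
  with pos have disj: "?R \<inter> cnj ` ?R = {}"
    by (meson disjoint_iff less_asym)
  have inj: "inj_on root T"
  proof (rule inj_onI)
    fix x y assume "x \<in> T" "y \<in> T" "root x = root y"
    then show "x = y"
      using Im_root_sq[of "fst x" "snd x"] Im_root_sq[of "fst y" "snd y"]
      by (auto simp: root_def prod_eq_iff)
  qed
  have fin: "finite ?Z"
    by (rule poly_roots_finite[OF p])
  then have "finite ?R"
    using sub by (auto intro: finite_subset)
  have "2 * card T = card ?R + card (cnj ` ?R)"
    using inj by (simp add: card_image inj_on_def)
  also have "\<dots> = card (?R \<union> cnj ` ?R)"
    using \<open>finite ?R\<close> disj by (simp add: card_Un_disjoint)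
  also have "\<dots> \<le> card ?Z"
    by (rule card_mono[OF fin sub])
  also have "\<dots> \<le> degree p"
    by (rule card_poly_roots_bound[OF p])
  finally show ?thesis
    using \<open>finite ?R\<close> inj finite_image_iff by auto
qed

lemma card_spherical_root_classes:
  assumes a: "\<forall>j\<le>n. a j \<in> cd_carrier k" and an: "a n \<noteq> cd_zero k"
  defines "F \<equiv> \<lambda>l. (cd_tr k l, cd_norm k l)"
  shows "finite (F ` {l. cd_spherical_root k a n l}) \<and>
    card (F ` {l. cd_spherical_root k a n l}) \<le> n div 2"
proof -
  have "\<exists>i < 2 ^ k. a n ! i \<noteq> 0"
  proof (rule ccontr)
    assume "\<not> ?thesis"
    then have "a n = cd_zero k"
      using a by (intro nth_equalityI) (auto simp: cd_carrier_def cd_zero_def)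
    with an show False ..
  qed
  then obtain i where i: "i < 2 ^ k" "a n ! i \<noteq> 0"
    by blast
  define p where "p = (\<Sum>j\<le>n. monom (complex_of_real (a j ! i)) j)"
  have "coeff p n \<noteq> 0"
    using i by (simp add: p_def coeff_sum_monom)
  then have p: "p \<noteq> 0"
    by auto
  have "degree p \<le> n"
    unfolding p_def by (auto intro!: degree_sum_le order.trans[OF degree_monom_le])
  have "poly p z = 0" if "(t, q) \<in> F ` {l. cd_spherical_root k a n l}"
    and "z\<^sup>2 = of_real t * z - of_real q" for t q z
    using that spherical_root_coord_poly_root[OF a _ i(1)] by (auto simp: F_def p_def)
  moreover have "t\<^sup>2 < 4 * q" if "(t, q) \<in> F ` {l. cd_spherical_root k a n l}" for t q
    using that by (auto simp: F_def cd_spherical_root_def cd_carrier_def not_cd_is_real_iff)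
  ultimately have "finite (F ` {l. cd_spherical_root k a n l}) \<and>
      2 * card (F ` {l. cd_spherical_root k a n l}) \<le> degree p"
    using card_nonreal_quadratic_factors_le[OF p] by blast
  with \<open>degree p \<le> n\<close> show ?thesis
    by auto
qed

lemma cd_quad_class_subset_spherical_roots:
  assumes c: "cd_spherical_root k a n c"
  shows "cd_quad_class k c \<subseteq> {l. cd_spherical_root k a n l}"
proof
  fix x assume "x \<in> cd_quad_class k c"
  then have x: "length x = 2 ^ k" "x \<in> cd_carrier k"
    and tr_norm: "cd_tr k x = cd_tr k c" "cd_norm k x = cd_norm k c"
    by (auto simp: cd_quad_class_def cd_quad_equiv_def cd_carrier_def)
  then have charpoly: "cd_charpoly_eval k x = cd_charpoly_eval k c"
    by (simp add: cd_charpoly_eval_def fun_eq_iff)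
  have "\<not> cd_is_real k x"
    using c x tr_norm by (auto simp: cd_spherical_root_def cd_carrier_def not_cd_is_real_iff)
  moreover have "cd_charpoly_eval k c x = cd_zero k"
    using cd_charpoly_eval_self[OF x(1)] charpoly by simp
  ultimately show "x \<in> {l. cd_spherical_root k a n l}"
    using c x charpoly by (auto simp: cd_spherical_root_def)
qed

lemma spherical_roots_eq_UN_quad_class:
  assumes "C \<subseteq> {l. cd_spherical_root k a n l}"
    and "(\<lambda>l. (cd_tr k l, cd_norm k l)) ` C =
      (\<lambda>l. (cd_tr k l, cd_norm k l)) ` {l. cd_spherical_root k a n l}"
  shows "{l. cd_spherical_root k a n l} = (\<Union>c\<in>C. cd_quad_class k c)"
proof (intro equalityI subsetI)
  fix l assume l: "l \<in> {l. cd_spherical_root k a n l}"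
  then have "(cd_tr k l, cd_norm k l) \<in> (\<lambda>l. (cd_tr k l, cd_norm k l)) ` C"
    using assms(2) by blast
  then obtain c where "c \<in> C" "cd_tr k l = cd_tr k c" "cd_norm k l = cd_norm k c"
    by auto
  moreover have "l \<in> cd_carrier k"
    using l by (simp add: cd_spherical_root_def)
  ultimately show "l \<in> (\<Union>c\<in>C. cd_quad_class k c)"
    by (auto simp: cd_quad_class_def cd_quad_equiv_def)
next
  fix l assume "l \<in> (\<Union>c\<in>C. cd_quad_class k c)"
  then show "l \<in> {l. cd_spherical_root k a n l}"
    using assms(1) cd_quad_class_subset_spherical_roots by blast
qed

theorem corollary3p14:
  fixes k n :: nat and a :: "nat \<Rightarrow> real list"
  assumes "\<forall>j \<le> n. a j \<in> cd_carrier k"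
    and "a n \<noteq> cd_zero k"
  shows "\<exists>C. C \<subseteq> cd_carrier k \<and> finite C \<and> card C \<le> n div 2 \<and>
           {l. cd_spherical_root k a n l} = (\<Union>c\<in>C. cd_quad_class k c)"
proof -
  let ?S = "{l. cd_spherical_root k a n l}" and ?F = "\<lambda>l. (cd_tr k l, cd_norm k l)"
  define C where "C = inv_into ?S ?F ` ?F ` ?S"
  have CS: "C \<subseteq> ?S"
    unfolding C_def using inv_into_into[of _ ?F ?S] by blast
  have "?F ` C = ?F ` ?S"
    unfolding C_def by (rule image_inv_into_cancel) auto
  with CS have "?S = (\<Union>c\<in>C. cd_quad_class k c)"
    by (rule spherical_roots_eq_UN_quad_class)
  moreover have "finite (?F ` ?S)" "card (?F ` ?S) \<le> n div 2"
    using card_spherical_root_classes[OF assms] by auto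
  then have "finite C" "card C \<le> n div 2"
    unfolding C_def using card_image_le le_trans by blast+
  moreover have "C \<subseteq> cd_carrier k"
    using CS by (auto simp: cd_spherical_root_def)
  ultimately show ?thesis
    by blast
qed

end
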